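(* Let $G$ be a group and let $k\ge 0$ be an integer. The core quandle $Core(G)$ is $(2k+1)$-stable if and only if every element of $G$ satisfies $g^2=1$; in other words, $G$ is isomorphic to $\bigoplus_{i\in I}\mathbb{Z}_2$ for some (finite or infinite) set $I$.
   Context: The core quandle $Core(G)$ of a group $G$ is the set $G$ with operation $g\rhd h:=hg^{-1}h$. For elements $u_1,\ldots,u_n$ of a rack $X$ write $x\rhd(u_i)_{i=1}^n:=(\cdots((x\rhd u_1)\rhd u_2)\cdots)\rhd u_n$. A stabilizing family of order $n$ for $X$ is a finite family $(u_1,\ldots,u_n)$ of elements of $X$ such that $x\rhd(u_i)_{i=1}^n=x$ for all $x\in X$; $X$ is $n$-stable if it has a stabilizing family of order $n$. *)

theory Defs
  imports "HOL-Algebra.Group"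
begin

definition core_op :: "('a, 'b) monoid_scheme \<Rightarrow> 'a \<Rightarrow> 'a \<Rightarrow> 'a" where
  "core_op G g h = h \<otimes>\<^bsub>G\<^esub> inv\<^bsub>G\<^esub> g \<otimes>\<^bsub>G\<^esub> h"

definition rack_iter :: "('a \<Rightarrow> 'a \<Rightarrow> 'a) \<Rightarrow> 'a \<Rightarrow> 'a list \<Rightarrow> 'a" where
  "rack_iter op x us = foldl op x us"

definition stabilizing_family :: "'a set \<Rightarrow> ('a \<Rightarrow> 'a \<Rightarrow> 'a) \<Rightarrow> nat \<Rightarrow> 'a list \<Rightarrow> bool" where
  "stabilizing_family X op n us \<longleftrightarrow>
     length us = n \<and> set us \<subseteq> X \<and> (\<forall>x\<in>X. rack_iter op x us = x)"

definition n_stable :: "'a set \<Rightarrow> ('a \<Rightarrow> 'a \<Rightarrow> 'a) \<Rightarrow> nat \<Rightarrow> bool" where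
  "n_stable X op n \<longleftrightarrow> (\<exists>us. stabilizing_family X op n us)"

definition core_n_stable :: "('a, 'b) monoid_scheme \<Rightarrow> nat \<Rightarrow> bool" where
  "core_n_stable G n = n_stable (carrier G) (core_op G) n"

end

theory Submission
  imports Defs
begin

text \<open>A word of length n in the core operation acts on G as x \<mapsto> A x B for even n and
  as x \<mapsto> A x\<inverse> B for odd n. For odd n such a map is the identity only if inversion
  is an inner automorphism x \<mapsto> A\<inverse> x A; inversion being a homomorphism forces G to be
  abelian, and then x\<inverse> = A\<inverse> x A = x. Conversely, if every element is an involution,
  then x \<rhd> 1 = x\<inverse> = x, so the constant family 1, \<dots>, 1 stabilizes.\<close>

lemma core_n_stable_iff:
  "core_n_stable G n \<longleftrightarrow>
     (\<exists>us. length us = n \<and> set us \<subseteq> carrier G \<and> (\<forall>x\<in>carrier G. foldl (core_op G) x us = x))"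
  unfolding core_n_stable_def n_stable_def stabilizing_family_def rack_iter_def by simp

lemma (in group) core_op_one_right: "x \<in> carrier G \<Longrightarrow> core_op G x \<one> = inv x"
  by (simp add: core_op_def)

lemma (in group) foldl_core_op_replicate_one:
  "x \<in> carrier G \<Longrightarrow> foldl (core_op G) x (replicate n \<one>) = (if even n then x else inv x)"
  by (induction n) (auto simp: core_op_one_right simp flip: replicate_append_same)

lemma (in group) foldl_core_op_eq:
  assumes "set us \<subseteq> carrier G"
  shows "\<exists>A\<in>carrier G. \<exists>B\<in>carrier G. \<forall>x\<in>carrier G.
           foldl (core_op G) x us = A \<otimes> (if even (length us) then x else inv x) \<otimes> B"
  using assms
proof (induction us rule: rev_induct)
  case Nil
  show ?case by (intro bexI[of _ \<one>]) auto
next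
  case (snoc u us)
  then have u: "u \<in> carrier G" by simp
  from snoc obtain A B where A: "A \<in> carrier G" and B: "B \<in> carrier G" and IH: "\<forall>x\<in>carrier G.
      foldl (core_op G) x us = A \<otimes> (if even (length us) then x else inv x) \<otimes> B"
    by auto
  show ?case
  proof (rule bexI[of _ "u \<otimes> inv B"], rule bexI[of _ "inv A \<otimes> u"], rule ballI)
    fix x assume x: "x \<in> carrier G"
    define y where "y = (if even (length us) then x else inv x)"
    have y: "y \<in> carrier G" and inv_y: "inv y = (if even (length (us @ [u])) then x else inv x)"
      using x by (auto simp: y_def)
    have "foldl (core_op G) x (us @ [u]) = u \<otimes> inv (A \<otimes> y \<otimes> B) \<otimes> u"
      using IH x by (simp add: core_op_def y_def)
    also have "\<dots> = (u \<otimes> inv B) \<otimes> inv y \<otimes> (inv A \<otimes> u)"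
      using A B y u by (simp add: inv_mult_group m_assoc)
    finally show "foldl (core_op G) x (us @ [u]) =
        (u \<otimes> inv B) \<otimes> (if even (length (us @ [u])) then x else inv x) \<otimes> (inv A \<otimes> u)"
      by (simp only: inv_y)
  qed (use A B u in auto)
qed

lemma (in group) comm_if_inv_mult_distrib:
  assumes inv_mult: "\<And>a b. a \<in> carrier G \<Longrightarrow> b \<in> carrier G \<Longrightarrow> inv (a \<otimes> b) = inv a \<otimes> inv b"
    and a: "a \<in> carrier G" and b: "b \<in> carrier G"
  shows "a \<otimes> b = b \<otimes> a"
proof -
  have "a \<otimes> b = inv (inv a \<otimes> inv b)" using inv_mult[of "inv a" "inv b"] a b by simp
  also have "\<dots> = b \<otimes> a" using a b by (simp add: inv_mult_group)
  finally show ?thesis .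
qed

lemma (in group) square_eq_one_if_inv_twisted_eq_id:
  assumes A: "A \<in> carrier G" and B: "B \<in> carrier G"
    and fix_all: "\<And>x. x \<in> carrier G \<Longrightarrow> A \<otimes> inv x \<otimes> B = x"
    and g: "g \<in> carrier G"
  shows "g \<otimes> g = \<one>"
proof -
  have "A \<otimes> B = \<one>"
    using fix_all[of \<one>] A B by simp
  then have "B = inv A"
    using inv_unique[of "inv A" A B] A B by simp
  then have inv_conj: "inv x = inv A \<otimes> x \<otimes> A" if x: "x \<in> carrier G" for x
  proof -
    have "inv x = inv A \<otimes> (A \<otimes> inv x \<otimes> B) \<otimes> A"
      using A x \<open>B = inv A\<close> by (simp add: m_assoc flip: m_assoc[of "inv A" A])
    then show ?thesis using fix_all[OF x] by simp
  qed
  have inv_mult: "inv (a \<otimes> b) = inv a \<otimes> inv b" if a: "a \<in> carrier G" and b: "b \<in> carrier G" for a b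
  proof -
    have "inv A \<otimes> (a \<otimes> b) \<otimes> A = (inv A \<otimes> a \<otimes> A) \<otimes> (inv A \<otimes> b \<otimes> A)"
      using A a b by (simp add: m_assoc flip: m_assoc[of A "inv A"])
    then show ?thesis
      by (simp only: inv_conj[OF a] inv_conj[OF b] inv_conj[OF m_closed[OF a b]])
  qed
  have "inv g = inv A \<otimes> g \<otimes> A"
    using inv_conj g .
  also have "\<dots> = g \<otimes> inv A \<otimes> A"
    using comm_if_inv_mult_distrib[OF inv_mult _ g, of "inv A"] A by simp
  also have "\<dots> = g"
    using A g by (simp add: m_assoc)
  finally have "inv g = g" .
  then show ?thesis using r_inv[OF g] by simp
qed

lemma (in group) square_eq_one_if_core_odd_stable:
  assumes "core_n_stable G (2 * k + 1)" and g: "g \<in> carrier G"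
  shows "g \<otimes> g = \<one>"
proof -
  obtain us where len: "length us = 2 * k + 1" and us: "set us \<subseteq> carrier G"
    and stab: "\<forall>x\<in>carrier G. foldl (core_op G) x us = x"
    using assms(1) by (auto simp: core_n_stable_iff)
  obtain A B where "A \<in> carrier G" "B \<in> carrier G"
    and "\<forall>x\<in>carrier G. foldl (core_op G) x us = A \<otimes> inv x \<otimes> B"
    using foldl_core_op_eq[OF us] len by auto
  with stab g show ?thesis
    using square_eq_one_if_inv_twisted_eq_id by metis
qed

lemma (in group) core_odd_stable_if_square_eq_one:
  assumes "\<forall>g\<in>carrier G. g \<otimes> g = \<one>"
  shows "core_n_stable G (2 * k + 1)"
proof -
  have "\<forall>x\<in>carrier G. foldl (core_op G) x (replicate (2 * k + 1) \<one>) = x"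
  proof
    fix x assume x: "x \<in> carrier G"
    then have "inv x = x"
      using assms by (simp add: inv_equality)
    then show "foldl (core_op G) x (replicate (2 * k + 1) \<one>) = x"
      using foldl_core_op_replicate_one[OF x, of "2 * k + 1"] by simp
  qed
  then show ?thesis
    unfolding core_n_stable_iff by (intro exI[of _ "replicate (2 * k + 1) \<one>"]) (simp add: set_replicate_conv_if)
qed

theorem mainTheorem2:
  fixes G :: "('a, 'b) monoid_scheme" and k :: nat
  assumes "group G"
  shows "core_n_stable G (2 * k + 1) \<longleftrightarrow> (\<forall>g\<in>carrier G. g \<otimes>\<^bsub>G\<^esub> g = \<one>\<^bsub>G\<^esub>)"
  using group.square_eq_one_if_core_odd_stable[OF assms]
    group.core_odd_stable_if_square_eq_one[OF assms] by blast

end
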